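(* Let $\omega\colon\mathbf Z_+\to(0,+\infty)$ be a positive weight and let $f(z)=\sum_{k\ge3}c_kz^k\in\mathcal X_\omega$ be such that for every $n\ge0$ and every $m\ge1$, \[\frac{c_{(6m+4)2^n}}{\omega((6m+4)2^n)}=\frac{c_{(2m+1)2^n}}{\omega((2m+1)2^n)}\quad\text{and}\quad c_{2^{n+2}}=0.\] Then for every $k\ge3$ with $k\notin\{2^i;\ i\ge2\}$ there exist integer sequences $(m_n)_{n\ge1}$, $(p_n)_{n\ge1}$, $(j_n)_{n\ge1}$ (depending on $k$) such that: (i) $c_k=\big(\omega((2m_1+1)2^{p_1})/\omega((6m_n+4)2^{p_n})\big)\,c_{(6m_n+4)2^{p_n}}$ for every $n\ge1$; (ii) $m_n\ge1$ for every $n\ge1$; (iii) $3m_n+2=T^{j_n}(k)$ for every $n\ge1$; (iv) for every $n\ge1$, $j_{n+1}>j_n$ if and only if $3m_n+2\notin\{2^i;\ i\ge2\}$; (v) $(j_n)_{n\ge1}$ and $((6m_n+4)2^{p_n})_{n\ge1}$ are either both strictly increasing or both stationary.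
   Context: $T\colon\mathbf Z_+\to\mathbf Z_+$ is the modified Collatz map: $T(n)=n/2$ for $n$ even, $T(n)=(3n+1)/2$ for $n$ odd. $\mathcal X_\omega$ is the Hilbert space of holomorphic functions $f(z)=\sum_{n\ge3}c_nz^n$ on the unit disk with $\|f\|_\omega^2=\sum_{n\ge3}|c_n|^2/\omega(n)<\infty$. *)

theory Defs
  imports Complex_Main
begin

definition collatzT :: "nat \<Rightarrow> nat" where
  "collatzT n = (if even n then n div 2 else (3 * n + 1) div 2)"

text \<open>Membership in the weighted Hilbert space X_omega, expressed through the
  Taylor coefficients c of f(z) = sum_{n>=3} c_n z^n.\<close>
definition in_X_omega :: "(nat \<Rightarrow> real) \<Rightarrow> (nat \<Rightarrow> complex) \<Rightarrow> bool" where
  "in_X_omega \<omega> c \<longleftrightarrow> (\<forall>n<3. c n = 0) \<and> summable (\<lambda>n. (cmod (c n))\<^sup>2 / \<omega> n)"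

end

theory Submission
  imports Defs
begin

text \<open>
  Put \<open>\<rho>(x) = c\<^sub>x / \<omega>(x)\<close>. The hypothesis says that \<open>\<rho>\<close> is unchanged by
  \<open>(2m+1) 2\<^sup>n \<mapsto> (6m+4) 2\<^sup>n = T(2m+1) 2\<^sup>n\<^sup>+\<^sup>1\<close>, i.e. by an odd Collatz step carried out at
  scale \<open>2\<^sup>n\<close>. Write \<open>k = (2a+1) 2\<^sup>q\<close> with \<open>a \<ge> 1\<close>: after \<open>q\<close> halvings and one odd step
  the orbit of \<open>k\<close> reaches \<open>T\<^sup>q\<^sup>+\<^sup>1(k) = 3a+2\<close>, and \<open>\<rho>(k) = \<rho>((6a+4) 2\<^sup>q)\<close>. Repeating this
  with \<open>3a+2 = (2a'+1) 2\<^sup>q\<^sup>'\<close> produces the sequences; they become stationary as soon as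
  \<open>3m+2\<close> is a power of two, which has no odd part \<open>2a'+1 \<ge> 3\<close>, and increase strictly
  otherwise.
\<close>

definition powers_of_two_ge4 :: "nat set" where
  "powers_of_two_ge4 = {2^i | i. i \<ge> 2}"

lemma odd_times_power_of_two: "0 < (x::nat) \<Longrightarrow> \<exists>a q. x = (2*a+1) * 2^q"
proof (induction x rule: less_induct)
  case (less x)
  show ?case
  proof (cases "even x")
    case True
    with less.prems have "x div 2 < x" "0 < x div 2" by auto
    then obtain a q where "x div 2 = (2*a+1) * 2^q"
      using less.IH by blast
    with True have "x = (2*a+1) * 2^Suc q" by auto
    then show ?thesis by blast
  next
    case False
    then have "x = (2*(x div 2)+1) * 2^0" by simp
    then show ?thesis by blast
  qed
qed

lemma odd_times_power_of_two_nontrivial: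
  assumes "3 \<le> x" "x \<notin> powers_of_two_ge4"
  shows "\<exists>a q. 1 \<le> a \<and> x = (2*a+1) * 2^q"
proof -
  obtain a q where x: "x = (2*a+1) * 2^q"
    using odd_times_power_of_two[of x] assms(1) by auto
  have "a \<noteq> 0"
  proof
    assume "a = 0"
    with x have "x = 2^q" by simp
    moreover from this assms(1) have "q \<ge> 2"
      by (cases "q = 0 \<or> q = 1") auto
    ultimately show False using assms(2) unfolding powers_of_two_ge4_def by blast
  qed
  then have "1 \<le> a" by simp
  with x show ?thesis by blast
qed

definition odd_decomp :: "nat \<Rightarrow> nat \<times> nat" where
  "odd_decomp x = (SOME (a, q). 1 \<le> a \<and> x = (2*a+1) * 2^q)"

lemma odd_decompD:
  assumes "3 \<le> x" "x \<notin> powers_of_two_ge4" "odd_decomp x = (a, q)"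
  shows "1 \<le> a" "x = (2*a+1) * 2^q"
proof -
  have "\<exists>aq. (\<lambda>(a, q). 1 \<le> a \<and> x = (2*a+1) * 2^q) aq"
    using odd_times_power_of_two_nontrivial[OF assms(1,2)] by auto
  from someI_ex[OF this] assms(3) show "1 \<le> a" "x = (2*a+1) * 2^q"
    unfolding odd_decomp_def by auto
qed

lemma collatzT_funpow_odd_block: "(collatzT ^^ Suc q) ((2*a+1) * 2^q) = 3*a+2"
proof (induction q)
  case 0
  show ?case by (simp add: collatzT_def)
next
  case (Suc q)
  have "collatzT ((2*a+1) * 2^Suc q) = (2*a+1) * 2^q"
    by (simp add: collatzT_def)
  with Suc show ?case
    by (simp only: funpow_Suc_right o_apply)
qed

definition odd_step_invariant :: "(nat \<Rightarrow> 'a) \<Rightarrow> bool" where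
  "odd_step_invariant \<rho> \<longleftrightarrow>
     (\<forall>n m. 1 \<le> m \<longrightarrow> \<rho> ((6*m+4) * 2^n) = \<rho> ((2*m+1) * 2^n))"

text \<open>
  A state \<open>(m, p, j)\<close> records the point \<open>T\<^sup>j(k) = 3m+2\<close> of the orbit of \<open>k\<close> together with the
  sample \<open>(6m+4) 2\<^sup>p\<close> at which \<open>\<rho>\<close> is evaluated. One step jumps to the point just after the
  next odd Collatz step; states at powers of two are fixed.
\<close>

definition collatz_block_step :: "nat \<times> nat \<times> nat \<Rightarrow> nat \<times> nat \<times> nat" where
  "collatz_block_step = (\<lambda>(m, p, j).
     if 3*m+2 \<in> powers_of_two_ge4 then (m, p, j)
     else case odd_decomp (3*m+2) of (a, q) \<Rightarrow> (a, p+q+1, j+q+1))"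

lemma collatz_block_step_stop:
  "3*m+2 \<in> powers_of_two_ge4 \<Longrightarrow> collatz_block_step (m, p, j) = (m, p, j)"
  by (simp only: collatz_block_step_def prod.case if_True)

lemma collatz_block_step_move:
  "3*m+2 \<notin> powers_of_two_ge4 \<Longrightarrow> odd_decomp (3*m+2) = (a, q) \<Longrightarrow>
   collatz_block_step (m, p, j) = (a, p+q+1, j+q+1)"
  by (simp only: collatz_block_step_def prod.case if_False)

lemma odd_decomp_3m2:
  assumes "1 \<le> m" "3*m+2 \<notin> powers_of_two_ge4" "odd_decomp (3*m+2) = (a, q)"
  shows "1 \<le> a" "3*m+2 = (2*a+1) * 2^q" "(6*m+4) * 2^p = (2*a+1) * 2^(p+q+1)"
proof -
  show a: "1 \<le> a" and mq: "3*m+2 = (2*a+1) * 2^q"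
    using odd_decompD[of "3*m+2"] assms by auto
  have "(6*m+4) * 2^p = (3*m+2) * 2^(p+1)" by (simp add: algebra_simps)
  also have "\<dots> = (2*a+1) * 2^(p+q+1)" unfolding mq by (simp add: power_add algebra_simps)
  finally show "(6*m+4) * 2^p = (2*a+1) * 2^(p+q+1)" .
qed

definition block_orbit_state :: "nat \<Rightarrow> nat \<times> nat \<times> nat \<Rightarrow> bool" where
  "block_orbit_state k = (\<lambda>(m, p, j). 1 \<le> m \<and> 3*m+2 = (collatzT ^^ j) k)"

lemma block_orbit_state_step:
  assumes "block_orbit_state k (m, p, j)"
  shows "block_orbit_state k (collatz_block_step (m, p, j))"
proof (cases "3*m+2 \<in> powers_of_two_ge4")
  case True
  with assms show ?thesis by (simp only: collatz_block_step_stop)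
next
  case False
  obtain a q where aq: "odd_decomp (3*m+2) = (a, q)" by fastforce
  from assms have m: "1 \<le> m" and j: "3*m+2 = (collatzT ^^ j) k"
    by (auto simp: block_orbit_state_def)
  note block = odd_decomp_3m2[OF m False aq]
  have "j+q+1 = Suc q + j" by simp
  then have "(collatzT ^^ (j+q+1)) k = (collatzT ^^ Suc q) ((collatzT ^^ j) k)"
    by (simp only: funpow_add o_apply)
  also have "\<dots> = 3*a+2"
    by (simp only: j[symmetric] block(2) collatzT_funpow_odd_block)
  finally show ?thesis
    using block(1) by (simp add: collatz_block_step_move[OF False aq] block_orbit_state_def)
qed

lemma odd_step_invariant_collatz_block_step:
  assumes \<rho>: "odd_step_invariant \<rho>" and m: "1 \<le> m"
    and step: "collatz_block_step (m, p, j) = (m', p', j')"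
  shows "\<rho> ((6*m'+4) * 2^p') = \<rho> ((6*m+4) * 2^p)"
proof (cases "3*m+2 \<in> powers_of_two_ge4")
  case True
  with step show ?thesis by (simp add: collatz_block_step_stop)
next
  case False
  obtain a q where aq: "odd_decomp (3*m+2) = (a, q)" by fastforce
  note block = odd_decomp_3m2[OF m False aq]
  from step have "m' = a" "p' = p+q+1"
    by (simp_all add: collatz_block_step_move[OF False aq])
  then have "\<rho> ((6*m'+4) * 2^p') = \<rho> ((2*a+1) * 2^(p+q+1))"
    using \<rho> block(1) unfolding odd_step_invariant_def by blast
  also have "\<dots> = \<rho> ((6*m+4) * 2^p)" by (simp only: block(3))
  finally show ?thesis .
qed

lemma collatz_block_step_time_less_iff:
  assumes "collatz_block_step (m, p, j) = (m', p', j')"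
  shows "j < j' \<longleftrightarrow> 3*m+2 \<notin> powers_of_two_ge4"
proof -
  obtain a q where aq: "odd_decomp (3*m+2) = (a, q)" by fastforce
  show ?thesis
    using assms collatz_block_step_stop[of m p j] collatz_block_step_move[OF _ aq, of p j]
    by (cases "3*m+2 \<in> powers_of_two_ge4") auto
qed

lemma collatz_block_step_sample_less:
  assumes m: "1 \<le> m" and P: "3*m+2 \<notin> powers_of_two_ge4"
    and step: "collatz_block_step (m, p, j) = (m', p', j')"
  shows "(6*m+4) * 2^p < (6*m'+4) * 2^p'"
proof -
  obtain a q where aq: "odd_decomp (3*m+2) = (a, q)" by fastforce
  from step have m': "m' = a" "p' = p+q+1"
    by (simp_all add: collatz_block_step_move[OF P aq])
  have "(6*m+4) * 2^p = (2*a+1) * 2^(p+q+1)"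
    using odd_decomp_3m2[OF m P aq] by blast
  also have "\<dots> < (6*a+4) * 2^(p+q+1)" by (rule mult_strict_right_mono) auto
  finally show ?thesis by (simp add: m')
qed

lemma collatz_block_orbit_dichotomy:
  fixes m p j :: "nat \<Rightarrow> nat"
  assumes next_state: "\<forall>n\<ge>1. (m (n+1), p (n+1), j (n+1)) = collatz_block_step (m n, p n, j n)"
    and m: "\<forall>n\<ge>1. 1 \<le> m n"
  shows "((\<forall>n\<ge>1. j n < j (n+1)) \<and>
          (\<forall>n\<ge>1. (6 * m n + 4) * 2 ^ p n < (6 * m (n+1) + 4) * 2 ^ p (n+1))) \<or>
         (\<exists>N\<ge>1. \<forall>n\<ge>N. j n = j N \<and> (6 * m n + 4) * 2 ^ p n = (6 * m N + 4) * 2 ^ p N)"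
proof (cases "\<exists>N\<ge>1. 3 * m N + 2 \<in> powers_of_two_ge4")
  case True
  then obtain N where N: "N \<ge> 1" "3 * m N + 2 \<in> powers_of_two_ge4" by blast
  have "(m n, p n, j n) = (m N, p N, j N)" if "n \<ge> N" for n
    using that
  proof (induction n rule: dec_induct)
    case (step n)
    from step.hyps N(1) have "n \<ge> 1" by simp
    then have "(m (Suc n), p (Suc n), j (Suc n)) = collatz_block_step (m n, p n, j n)"
      using next_state[rule_format, of n] by (simp only: Suc_eq_plus1)
    also have "\<dots> = collatz_block_step (m N, p N, j N)" by (simp only: step.IH)
    also have "\<dots> = (m N, p N, j N)" by (rule collatz_block_step_stop[OF N(2)])
    finally show ?case .
  qed simp
  then have "\<forall>n\<ge>N. j n = j N \<and> (6 * m n + 4) * 2 ^ p n = (6 * m N + 4) * 2 ^ p N"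
    by (metis prod.inject)
  with N(1) show ?thesis by blast
next
  case False
  have "j n < j (n+1) \<and> (6 * m n + 4) * 2 ^ p n < (6 * m (n+1) + 4) * 2 ^ p (n+1)"
    if n: "n \<ge> 1" for n
  proof -
    from False n have "3 * m n + 2 \<notin> powers_of_two_ge4" by blast
    with next_state[rule_format, OF n, symmetric] show ?thesis
      using collatz_block_step_time_less_iff collatz_block_step_sample_less[OF m[rule_format, OF n]]
      by blast
  qed
  then show ?thesis by (intro disjI1) blast
qed

definition block_start :: "nat \<Rightarrow> nat \<times> nat \<times> nat" where
  "block_start k = (case odd_decomp k of (a, q) \<Rightarrow> (a, q, q+1))"

lemma block_startE:
  assumes "3 \<le> k" "k \<notin> powers_of_two_ge4"
  obtains a q where "block_start k = (a, q, q+1)" "1 \<le> a" "k = (2*a+1) * 2^q"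
proof -
  obtain a q where aq: "odd_decomp k = (a, q)" by fastforce
  with odd_decompD[OF assms aq] show thesis
    by (intro that[of a q]) (simp_all add: block_start_def)
qed

text \<open>The sequences are indexed from 1; index 0 repeats index 1.\<close>

definition block_state :: "nat \<Rightarrow> nat \<Rightarrow> nat \<times> nat \<times> nat" where
  "block_state k n = (collatz_block_step ^^ (n - 1)) (block_start k)"

definition block_m :: "nat \<Rightarrow> nat \<Rightarrow> nat" where
  "block_m k n = fst (block_state k n)"

definition block_p :: "nat \<Rightarrow> nat \<Rightarrow> nat" where
  "block_p k n = fst (snd (block_state k n))"

definition block_j :: "nat \<Rightarrow> nat \<Rightarrow> nat" where
  "block_j k n = snd (snd (block_state k n))"

lemma block_state_eq: "block_state k n = (block_m k n, block_p k n, block_j k n)"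
  by (simp add: block_m_def block_p_def block_j_def)

lemma block_state_Suc: "1 \<le> n \<Longrightarrow> block_state k (n+1) = collatz_block_step (block_state k n)"
  by (cases n) (simp_all add: block_state_def)

lemma block_m_p_one:
  assumes "3 \<le> k" "k \<notin> powers_of_two_ge4"
  shows "(2 * block_m k 1 + 1) * 2 ^ block_p k 1 = k"
proof -
  obtain a q where start: "block_start k = (a, q, q+1)" and k: "k = (2*a+1) * 2^q"
    using block_startE[OF assms] by blast
  from start have "block_m k 1 = a" "block_p k 1 = q"
    by (simp_all add: block_m_def block_p_def block_state_def)
  with k show ?thesis by simp
qed

lemma block_orbit_state_block_state:
  assumes k: "3 \<le> k" "k \<notin> powers_of_two_ge4"
  shows "block_orbit_state k (block_state k n)"
proof (induction n)
  case 0
  obtain a q where start: "block_start k = (a, q, q+1)" and a: "1 \<le> a"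
    and k_eq: "k = (2*a+1) * 2^q"
    using block_startE[OF k] by blast
  have "3*a+2 = (collatzT ^^ (q+1)) k"
    using collatzT_funpow_odd_block[of q a] unfolding k_eq by simp
  with start a show ?case
    by (simp add: block_state_def block_orbit_state_def)
next
  case (Suc n)
  show ?case
  proof (cases "n = 0")
    case True
    with Suc.IH show ?thesis by (simp add: block_state_def)
  next
    case False
    then have "block_state k (Suc n) = collatz_block_step (block_state k n)"
      using block_state_Suc[of n k] by simp
    then show ?thesis
      using Suc.IH block_orbit_state_step[of k "block_m k n" "block_p k n" "block_j k n"]
      by (simp only: block_state_eq[of k n])
  qed
qed

lemma block_m_ge1: "3 \<le> k \<Longrightarrow> k \<notin> powers_of_two_ge4 \<Longrightarrow> 1 \<le> block_m k n"
  using block_orbit_state_block_state[of k n] by (simp add: block_state_eq block_orbit_state_def)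

lemma collatzT_funpow_block_j:
  "3 \<le> k \<Longrightarrow> k \<notin> powers_of_two_ge4 \<Longrightarrow> 3 * block_m k n + 2 = (collatzT ^^ block_j k n) k"
  using block_orbit_state_block_state[of k n] by (simp add: block_state_eq block_orbit_state_def)

lemma block_state_next:
  "1 \<le> n \<Longrightarrow> (block_m k (n+1), block_p k (n+1), block_j k (n+1)) =
     collatz_block_step (block_m k n, block_p k n, block_j k n)"
  using block_state_Suc[of n k] by (simp only: block_state_eq)

lemma odd_step_invariant_block_sample:
  assumes \<rho>: "odd_step_invariant \<rho>" and k: "3 \<le> k" "k \<notin> powers_of_two_ge4"
  shows "\<rho> ((6 * block_m k n + 4) * 2 ^ block_p k n) = \<rho> k"
proof (induction n)
  case 0
  obtain a q where start: "block_start k = (a, q, q+1)" and a: "1 \<le> a"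
    and k_eq: "k = (2*a+1) * 2^q"
    using block_startE[OF k] by blast
  have "\<rho> ((6*a+4) * 2^q) = \<rho> k"
    using \<rho> a unfolding k_eq odd_step_invariant_def by blast
  with start show ?case
    by (simp add: block_m_def block_p_def block_state_def)
next
  case (Suc n)
  show ?case
  proof (cases "n = 0")
    case True
    with Suc.IH show ?thesis by (simp add: block_m_def block_p_def block_state_def)
  next
    case False
    then have "1 \<le> n" by simp
    from odd_step_invariant_collatz_block_step[OF \<rho> block_m_ge1[OF k] block_state_next[OF this, symmetric]]
    show ?thesis using Suc.IH by simp
  qed
qed

lemma block_j_less_Suc_iff:
  "1 \<le> n \<Longrightarrow> block_j k n < block_j k (n+1) \<longleftrightarrow> 3 * block_m k n + 2 \<notin> powers_of_two_ge4"
  using collatz_block_step_time_less_iff[OF block_state_next[symmetric]] .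

lemma block_sequences_increasing_or_stationary:
  assumes "3 \<le> k" "k \<notin> powers_of_two_ge4"
  shows "((\<forall>n\<ge>1. block_j k n < block_j k (n+1)) \<and>
          (\<forall>n\<ge>1. (6 * block_m k n + 4) * 2 ^ block_p k n
                  < (6 * block_m k (n+1) + 4) * 2 ^ block_p k (n+1))) \<or>
         (\<exists>N\<ge>1. \<forall>n\<ge>N. block_j k n = block_j k N \<and>
            (6 * block_m k n + 4) * 2 ^ block_p k n = (6 * block_m k N + 4) * 2 ^ block_p k N)"
  using block_state_next block_m_ge1[OF assms]
  by (intro collatz_block_orbit_dichotomy) simp_all

theorem lemma2p5:
  fixes \<omega> :: "nat \<Rightarrow> real" and c :: "nat \<Rightarrow> complex"
  assumes pos: "\<forall>n\<ge>1. \<omega> n > 0"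
    and inX: "in_X_omega \<omega> c"
    and h1: "\<forall>n m. m \<ge> 1 \<longrightarrow>
       c ((6*m+4) * 2^n) / complex_of_real (\<omega> ((6*m+4) * 2^n)) =
       c ((2*m+1) * 2^n) / complex_of_real (\<omega> ((2*m+1) * 2^n))"
    and h2: "\<forall>n. c (2^(n+2)) = 0"
  shows "\<forall>k\<ge>3. k \<notin> {2^i | i. i \<ge> (2::nat)} \<longrightarrow>
    (\<exists>m p j :: nat \<Rightarrow> nat.
      (\<forall>n\<ge>1. c k = complex_of_real (\<omega> ((2 * m 1 + 1) * 2 ^ p 1) / \<omega> ((6 * m n + 4) * 2 ^ p n))
                     * c ((6 * m n + 4) * 2 ^ p n)) \<and>
      (\<forall>n\<ge>1. m n \<ge> 1) \<and>
      (\<forall>n\<ge>1. 3 * m n + 2 = (collatzT ^^ j n) k) \<and>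
      (\<forall>n\<ge>1. j (n+1) > j n \<longleftrightarrow> 3 * m n + 2 \<notin> {2^i | i. i \<ge> (2::nat)}) \<and>
      (((\<forall>n\<ge>1. j n < j (n+1)) \<and>
        (\<forall>n\<ge>1. (6 * m n + 4) * 2 ^ p n < (6 * m (n+1) + 4) * 2 ^ p (n+1))) \<or>
       (\<exists>N\<ge>1. \<forall>n\<ge>N. j n = j N \<and> (6 * m n + 4) * 2 ^ p n = (6 * m N + 4) * 2 ^ p N)))"
  unfolding powers_of_two_ge4_def[symmetric]
proof (intro allI impI, goal_cases)
  case (1 k)
  then have k: "3 \<le> k" "k \<notin> powers_of_two_ge4" by simp_all
  define \<rho> where "\<rho> x = c x / complex_of_real (\<omega> x)" for x
  have "odd_step_invariant \<rho>"
    using h1 by (simp add: odd_step_invariant_def \<rho>_def)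
  note ratio = odd_step_invariant_block_sample[OF this k]
  have scaled: "c k = complex_of_real (\<omega> ((2 * block_m k 1 + 1) * 2 ^ block_p k 1)
                        / \<omega> ((6 * block_m k n + 4) * 2 ^ block_p k n))
                 * c ((6 * block_m k n + 4) * 2 ^ block_p k n)" for n
  proof -
    have "\<omega> ((6 * block_m k n + 4) * 2 ^ block_p k n) > 0" "\<omega> k > 0"
      using pos k(1) by simp_all
    with ratio[of n] show ?thesis
      unfolding block_m_p_one[OF k] by (simp add: \<rho>_def field_simps)
  qed
  show ?case
    by (intro exI[of _ "block_m k"] exI[of _ "block_p k"] exI[of _ "block_j k"] conjI allI impI
        scaled block_m_ge1[OF k] collatzT_funpow_block_j[OF k] block_j_less_Suc_iff
        block_sequences_increasing_or_stationary[OF k])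
qed

end
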